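(* Let $p$ be an odd prime, $n$ a positive integer, $N=p^n$, and $\omega_N=e^{2\pi\sqrt{-1}/N}$. For $1\le k\le n$ let $D_0^{(p^k)}$ (resp. $D_1^{(p^k)}$) be the set of nonzero squares (resp. non-squares) among the units of $\mathbb{Z}_{p^k}$, i.e. $D_i^{(p^k)}=\{g^{2t+i}\bmod p^k\mid t=0,\dots,\frac{(p-1)p^{k-1}}{2}-1\}$ for a primitive root $g$ modulo $p^n$. For $0\le m<k\le n$ and $i\in\{0,1\}$, regard $p^{m}D_i^{(p^{k})}=\{p^{m}x\bmod p^{m+k} : x\in D_i^{(p^k)}\}$, and in particular $p^{n-k}D_i^{(p^k)}$ and $p^mD_i^{(p^{n-m})}$ as subsets of $\mathbb{Z}_{p^n}$. Let $$C_1=\{0\}\cup\bigcup_{k=1}^{n}p^{n-k}D_1^{(p^k)}\subseteq\mathbb{Z}_{p^n},$$ and define the binary sequence $(s_i)$ of period $N$ by $s_i=1$ if $i\bmod N\in C_1$ and $s_i=0$ otherwise. Let $S(x)=\sum_{i=0}^{N-1}s_ix^i$. Let $\eta_i^{(p)}=\sum_{x\in D_i^{(p)}}e^{2\pi\sqrt{-1}x/p}$ for $i=0,1$. Then for $a\in\mathbb{Z}_{N}$: $$S(\omega_N^a)=\begin{cases}\frac{p^n+1}{2}, & a=0,\\[2pt] \frac{p^m+1}{2}+p^m\eta_1^{(p)}, & a\in p^mD_0^{(p^{n-m})},\ m\in\{0,1,\dots,n-1\},\\[2pt] \frac{p^m+1}{2}+p^m\eta_0^{(p)}, & a\in p^mD_1^{(p^{n-m})},\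 m\in\{0,1,\dots,n-1\}.\end{cases}$$
   Context: The sequence $(s_i)$ is the Ding–Helleseth generalized cyclotomic sequence of period $p^n$. The sets $\{0\}$, $p^{n-k}D_0^{(p^k)}$, $p^{n-k}D_1^{(p^k)}$ ($1\le k\le n$) partition $\mathbb{Z}_{p^n}$. *)

theory Defs
  imports "HOL-Analysis.Analysis" "HOL-Number_Theory.Number_Theory"
begin

definition Dsq :: "nat \<Rightarrow> nat \<Rightarrow> nat set" where
  "Dsq p k = {x \<in> {0..<p^k}. coprime x p \<and> (\<exists>y. [y^2 = x] (mod p^k))}"

definition Dnsq :: "nat \<Rightarrow> nat \<Rightarrow> nat set" where
  "Dnsq p k = {x \<in> {0..<p^k}. coprime x p \<and> \<not> (\<exists>y. [y^2 = x] (mod p^k))}"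

definition D :: "nat \<Rightarrow> nat \<Rightarrow> nat \<Rightarrow> nat set" where
  "D i p k = (if i = 0 then Dsq p k else Dnsq p k)"

definition scaledD :: "nat \<Rightarrow> nat \<Rightarrow> nat \<Rightarrow> nat \<Rightarrow> nat set" where
  "scaledD m i p k = (\<lambda>x. (p^m * x) mod p^(m+k)) ` D i p k"

definition C1 :: "nat \<Rightarrow> nat \<Rightarrow> nat set" where
  "C1 p n = {0} \<union> (\<Union>k\<in>{1..n}. scaledD (n - k) 1 p k)"

definition dh_seq :: "nat \<Rightarrow> nat \<Rightarrow> nat \<Rightarrow> nat" where
  "dh_seq p n i = (if i mod p^n \<in> C1 p n then 1 else 0)"

definition omega :: "nat \<Rightarrow> complex" where
  "omega N = exp (2 * pi * \<i> / of_nat N)"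

definition S_poly :: "nat \<Rightarrow> nat \<Rightarrow> complex \<Rightarrow> complex" where
  "S_poly p n x = (\<Sum>i<p^n. of_nat (dh_seq p n i) * x ^ i)"

definition eta :: "nat \<Rightarrow> nat \<Rightarrow> complex" where
  "eta i p = (\<Sum>x\<in>D i p 1. exp (2 * pi * \<i> * of_nat x / of_nat p))"

end

theory Submission
  imports Defs
begin

text \<open>
  Splitting the support C1 of the sequence into 0 and the sets p^(n-k) D_1^(p^k) writes S(\<omega>_N^a)
  as 1 plus, for k = 1..n, the sums of \<omega>_(p^k)^(a x) over the non-squares x modulo p^k.
  By Hensel lifting a unit modulo p^k is a square iff its residue modulo p is, so the non-squares
  modulo p^k are exactly r + p q with r a non-square modulo p and q < p^(k-1). Summing over q, the
  k-th sum vanishes unless p^(k-1) divides a, equals p^(k-1) (p-1)/2 if p^k divides a, and equals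
  p^(k-1) times the Gauss period \<eta>_1 or \<eta>_0 if a = p^(k-1) b with b prime to p, according as b is a
  square or a non-square (multiplication by b preserves or swaps the two classes). For a = p^m b the
  terms k \<le> m form a geometric series with sum (p^m - 1)/2, and only k = m + 1 survives beyond it.
\<close>

lemma coprime_less_prime_iff:
  fixes p x :: nat
  assumes "prime p" and "x < p"
  shows "coprime x p \<longleftrightarrow> x \<noteq> 0"
proof (cases "x = 0")
  case True
  with assms(1) show ?thesis by auto
next
  case False
  hence "\<not> p dvd x" using assms(2) nat_dvd_not_less[of x p] by simp
  hence "coprime x p" using assms(1) coprime_commute prime_imp_coprime_nat by blast
  with False show ?thesis by simp
qed

lemma inj_on_mult_mod:
  fixes g M :: nat
  assumes "coprime g M"
  shows "inj_on (\<lambda>x. g * x mod M) {..<M}"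
proof
  fix x y assume "x \<in> {..<M}" "y \<in> {..<M}" "g * x mod M = g * y mod M"
  hence "[x = y] (mod M)" using cong_mult_lcancel_nat[OF assms] by (simp add: cong_def)
  thus "x = y" using \<open>x \<in> {..<M}\<close> \<open>y \<in> {..<M}\<close> by (simp add: cong_def)
qed

lemma prime_power_dvd_mult_coprime_iff:
  fixes p x :: nat
  assumes "prime p" and "coprime x p"
  shows "p^j dvd p^m * x \<longleftrightarrow> j \<le> m"
proof -
  have "coprime (p^j) x" using assms(2) by (simp add: coprime_commute)
  hence "p^j dvd p^m * x \<longleftrightarrow> p^j dvd p^m" by (rule coprime_dvd_mult_left_iff)
  thus ?thesis using prime_gt_1_nat[OF assms(1)] by (simp add: dvd_power_iff)
qed

section \<open>Quadratic residues modulo prime powers\<close>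

definition square_mod :: "nat \<Rightarrow> nat \<Rightarrow> bool" where
  "square_mod M x \<longleftrightarrow> (\<exists>y. [y^2 = x] (mod M))"

lemma square_mod_mod_iff [simp]: "square_mod M (x mod M) \<longleftrightarrow> square_mod M x"
  unfolding square_mod_def cong_def by simp

lemma square_mod_dvd_modulus: "square_mod M x \<Longrightarrow> d dvd M \<Longrightarrow> square_mod d x"
  unfolding square_mod_def using cong_dvd_modulus_nat by blast

lemma square_mod_iff_QuadRes: "square_mod M x \<longleftrightarrow> QuadRes (int M) (int x)"
proof
  assume "square_mod M x"
  then obtain y where "[y^2 = x] (mod M)" by (auto simp: square_mod_def)
  hence "[int y ^ 2 = int x] (mod int M)" by (metis cong_int_iff of_nat_power)
  thus "QuadRes (int M) (int x)" by (auto simp: QuadRes_def)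
next
  assume "QuadRes (int M) (int x)"
  then obtain y where y: "[y^2 = int x] (mod int M)" by (auto simp: QuadRes_def)
  have "[int (nat \<bar>y\<bar>) ^ 2 = int x] (mod int M)"
    using y by (simp add: power2_abs)
  hence "[nat \<bar>y\<bar> ^ 2 = x] (mod M)" by (metis cong_int_iff of_nat_power)
  thus "square_mod M x" by (auto simp: square_mod_def)
qed

lemma QuadRes_prime_power_lift:
  fixes p x y :: int
  assumes "prime p" "odd p" and "coprime x p" and "[y^2 = x] (mod p)" and "k \<ge> 1"
  shows "QuadRes (p^k) x"
  using \<open>k \<ge> 1\<close> unfolding QuadRes_def
proof (induction k rule: dec_induct)
  case base
  then show ?case using assms(4) by auto
next
  case (step k)
  then obtain z where z: "[z^2 = x] (mod p^k)" by auto
  then obtain c where c: "z^2 - x = p^k * c"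
    by (metis cong_iff_dvd_diff cong_sym dvdE)
  have "p dvd p^k" using \<open>k \<ge> 1\<close> by (simp add: dvd_power)
  hence "[z^2 = x] (mod p)" using z cong_dvd_modulus by blast
  hence "coprime (z^2) p" using assms(3) by (metis cong_imp_coprime cong_sym)
  hence "coprime z p" by simp
  hence "coprime (2*z) p" using assms(1,2) by simp
  then obtain w where w: "[2*z*w = 1] (mod p)" using cong_solve_coprime_int by blast
  \<comment> \<open>Newton step: choose t with c + 2 z t \<equiv> 0 (mod p), then z + t p^k is a root mod p^(k+1).\<close>
  define t where "t = - c * w"
  have "c + 2*z*t = c - c * (2*z*w)" by (simp add: t_def algebra_simps)
  also have "[\<dots> = c - c * 1] (mod p)" by (intro cong_diff cong_mult cong_refl w)
  finally have "p dvd c + 2*z*t" by (simp add: cong_0_iff)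
  then obtain e where e: "c + 2*z*t = p * e" ..
  have "p^(2*k) = p^Suc k * p^(k-1)"
    using \<open>k \<ge> 1\<close> by (simp only: power_add[symmetric]) (simp add: mult_2)
  have "(z + t*p^k)^2 - x = (z^2 - x) + 2*z*t*p^k + t^2*(p^k)^2"
    by (simp add: power2_eq_square algebra_simps)
  also have "\<dots> = p^k * (c + 2*z*t) + t^2 * p^(2*k)"
    using c by (simp add: algebra_simps flip: power_mult)
  also have "\<dots> = p^Suc k * (e + t^2 * p^(k - 1))"
    using e \<open>p^(2*k) = _\<close> by (simp add: algebra_simps)
  finally have "[(z + t*p^k)^2 = x] (mod p^Suc k)"
    by (metis cong_iff_dvd_diff cong_sym dvd_triv_left)
  thus ?case by blast
qed

lemma square_mod_prime_power_iff:
  assumes "prime p" "odd p" and "coprime x p" and "k \<ge> 1"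
  shows "square_mod (p^k) x \<longleftrightarrow> square_mod p x"
proof
  assume "square_mod (p^k) x"
  moreover have "p dvd p^k" using \<open>k \<ge> 1\<close> by (simp add: dvd_power)
  ultimately show "square_mod p x" by (rule square_mod_dvd_modulus)
next
  assume "square_mod p x"
  then obtain y where "[y^2 = int x] (mod int p)"
    by (auto simp: square_mod_iff_QuadRes QuadRes_def)
  hence "QuadRes (int p ^ k) (int x)"
    using assms by (intro QuadRes_prime_power_lift) auto
  thus "square_mod (p^k) x" by (simp add: square_mod_iff_QuadRes)
qed

lemma QuadRes_mult:
  fixes x y :: int
  assumes "prime p" "p > 2" and "\<not> int p dvd x" "\<not> int p dvd y"
  shows "QuadRes p (x*y) \<longleftrightarrow> (QuadRes p x \<longleftrightarrow> QuadRes p y)"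
proof -
  define h where "h = (p - 1) div 2"
  have xy: "\<not> int p dvd x*y"
    using assms by (simp add: prime_dvd_mult_iff)
  have Euler: "[Legendre a p = a ^ h] (mod p)" for a
    using euler_criterion[OF assms(1,2)] by (simp add: h_def)
  have "[Legendre (x*y) p = Legendre x p * Legendre y p] (mod p)"
    using Euler[of "x*y"] Euler[of x] Euler[of y]
    by (metis (no_types, lifting) cong_mult cong_sym cong_trans power_mult_distrib)
  moreover have unit: "Legendre a p \<in> {1, -1}" if "\<not> int p dvd a" for a
    using that by (auto simp: Legendre_def cong_0_iff)
  moreover have "\<not> int p dvd 2"
    using \<open>p > 2\<close> by (metis int_dvd_int_iff nat_dvd_not_less numeral_Bit0_eq_double
        of_nat_numeral zero_less_numeral)
  \<comment> \<open>Legendre symbols are \<plusminus>1 and p > 2, so this congruence is an equality\<close>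
  ultimately have "Legendre (x*y) p = Legendre x p * Legendre y p"
    using unit[OF assms(3)] unit[OF assms(4)] unit[OF xy]
    by (auto simp: cong_iff_dvd_diff)
  thus ?thesis
    using assms xy by (auto simp: Legendre_def cong_0_iff split: if_splits)
qed

lemma square_mod_mult:
  assumes "prime p" "odd p" and "coprime x p" "coprime y p"
  shows "square_mod p (x*y) \<longleftrightarrow> (square_mod p x \<longleftrightarrow> square_mod p y)"
proof -
  have "p > 2" using assms(1,2) prime_ge_2_nat[OF assms(1)] by (cases "p = 2") auto
  moreover have "\<not> int p dvd int z" if "coprime z p" for z
    using that assms(1) by auto
  ultimately show ?thesis
    using QuadRes_mult[OF assms(1)] assms(3,4) by (simp add: square_mod_iff_QuadRes)
qed

lemma square_mod_mult_mod:
  fixes p x r :: nat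
  assumes "prime p" "odd p" and "coprime x p" "coprime r p"
  shows "x * r mod p < p" "coprime (x * r mod p) p"
    and "square_mod p (x * r mod p) \<longleftrightarrow> (square_mod p x \<longleftrightarrow> square_mod p r)"
  using square_mod_mult[OF assms] assms prime_gt_0_nat[OF assms(1)] by auto

lemma mem_D_iff: "x \<in> D i p k \<longleftrightarrow> x < p^k \<and> coprime x p \<and> (square_mod (p^k) x \<longleftrightarrow> i = 0)"
  by (auto simp: D_def Dsq_def Dnsq_def square_mod_def)

lemma finite_D [simp]: "finite (D i p k)"
  by (rule finite_subset[of _ "{..<p^k}"]) (auto simp: mem_D_iff)

lemma Dsq_prime: "Dsq p 1 = {x. x < p \<and> coprime x p \<and> square_mod p x}"
  and Dnsq_prime: "Dnsq p 1 = {x. x < p \<and> coprime x p \<and> \<not> square_mod p x}"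
  by (auto simp: Dsq_def Dnsq_def square_mod_def)

lemma ex_non_square_mod_prime:
  fixes p :: nat
  assumes "prime p" "odd p"
  obtains g where "g \<in> Dnsq p 1"
proof -
  have "p \<ge> 3" using prime_ge_2_nat[OF assms(1)] assms(2) by (cases "p = 2") auto
  define sq where "sq y = y^2 mod p" for y
  have units: "{x. x < p \<and> coprime x p} = {1..<p}"
    using coprime_less_prime_iff[OF assms(1)] by auto
  have sub: "sq ` {1..<p} \<subseteq> {1..<p}"
    unfolding sq_def units[symmetric] using \<open>p \<ge> 3\<close> by auto
  \<comment> \<open>squaring identifies 1 and p - 1, so it is not onto the units\<close>
  have "sq (p - 1) = sq 1"
  proof -
    have "p = (p - 2) + 2" using \<open>p \<ge> 3\<close> by simp
    then obtain q where "p = q + 2" by blast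
    hence "(p - 1)^2 = 1 + p * q" by (simp add: power2_eq_square algebra_simps)
    moreover have "(1 + p * q) mod p = 1" using \<open>p \<ge> 3\<close> by (simp add: mod_Suc)
    ultimately show ?thesis using \<open>p \<ge> 3\<close> by (simp add: sq_def)
  qed
  hence "\<not> inj_on sq {1..<p}"
    using \<open>p \<ge> 3\<close> inj_onD[of sq "{1..<p}" "p - 1" 1] by fastforce
  hence "sq ` {1..<p} \<noteq> {1..<p}"
    using eq_card_imp_inj_on[of "{1..<p}" sq] by auto
  then obtain g where g: "g \<in> {1..<p}" "g \<notin> sq ` {1..<p}"
    using sub by blast
  have "\<not> square_mod p g"
  proof
    assume "square_mod p g"
    then obtain y where "[y^2 = g] (mod p)" by (auto simp: square_mod_def)
    hence "sq (y mod p) = g" using g by (simp add: sq_def cong_def power_mod)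
    moreover have "y mod p \<in> {1..<p}"
    proof -
      have "y mod p \<noteq> 0" using g \<open>sq (y mod p) = g\<close> by (auto simp: sq_def)
      thus ?thesis using \<open>p \<ge> 3\<close> by simp
    qed
    ultimately show False using g by blast
  qed
  show ?thesis
  proof (rule that)
    show "g \<in> Dnsq p 1"
      unfolding Dnsq_prime using g \<open>\<not> square_mod p g\<close> coprime_less_prime_iff[OF assms(1)] by simp
  qed
qed

lemma card_Dsq_Dnsq_prime:
  fixes p :: nat
  assumes "prime p" "odd p"
  shows "card (Dsq p 1) = (p - 1) div 2" "card (Dnsq p 1) = (p - 1) div 2"
proof -
  obtain g where g: "g \<in> Dnsq p 1" using ex_non_square_mod_prime[OF assms] .
  hence "coprime g p" "\<not> square_mod p g" unfolding Dnsq_prime by auto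
  note f = square_mod_mult_mod[OF assms this(1)]
  \<comment> \<open>multiplication by the non-square g swaps squares and non-squares injectively\<close>
  have inj: "inj_on (\<lambda>x. g * x mod p) A" if "A \<subseteq> {..<p}" for A
    using inj_on_subset[OF inj_on_mult_mod[OF \<open>coprime g p\<close>] that] .
  have "card (Dsq p 1) \<le> card (Dnsq p 1)" "card (Dnsq p 1) \<le> card (Dsq p 1)"
    unfolding Dsq_prime Dnsq_prime using f \<open>\<not> square_mod p g\<close>
    by (intro card_inj_on_le[OF inj]; auto)+
  moreover have "card (Dsq p 1) + card (Dnsq p 1) = p - 1"
  proof -
    have "Dsq p 1 \<union> Dnsq p 1 = {1..<p}"
      unfolding Dsq_prime Dnsq_prime using coprime_less_prime_iff[OF assms(1)] by auto
    moreover have "Dsq p 1 \<inter> Dnsq p 1 = {}" unfolding Dsq_prime Dnsq_prime by auto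
    ultimately show ?thesis
      by (metis card_Un_disjoint card_atLeastLessThan finite_Un finite_atLeastLessThan)
  qed
  ultimately show "card (Dsq p 1) = (p - 1) div 2" "card (Dnsq p 1) = (p - 1) div 2"
    by auto
qed

lemma card_D_prime:
  assumes "prime p" "odd p"
  shows "card (D i p 1) = (p - 1) div 2"
  using card_Dsq_Dnsq_prime[OF assms] by (simp add: D_def)

lemma image_mult_mod_D_prime:
  fixes p x :: nat
  assumes "prime p" "odd p" and "coprime x p"
  shows "(\<lambda>r. x * r mod p) ` D 1 p 1 = D (if square_mod p x then 1 else 0) p 1"
proof (rule card_subset_eq[OF finite_D])
  show "(\<lambda>r. x * r mod p) ` D 1 p 1 \<subseteq> D (if square_mod p x then 1 else 0) p 1"
    using square_mod_mult_mod[OF assms] by (auto simp: mem_D_iff)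
  have "inj_on (\<lambda>r. x * r mod p) (D 1 p 1)"
    by (rule inj_on_subset[OF inj_on_mult_mod[OF assms(3)]]) (auto simp: mem_D_iff)
  thus "card ((\<lambda>r. x * r mod p) ` D 1 p 1) = card (D (if square_mod p x then 1 else 0) p 1)"
    using card_D_prime[OF assms(1,2)] by (simp add: card_image)
qed

lemma mem_D_prime_power_iff:
  assumes "prime p" "odd p" and "k \<ge> 1"
  shows "x \<in> D i p k \<longleftrightarrow> x < p^k \<and> x mod p \<in> D i p 1"
proof -
  have "coprime (x mod p) p \<longleftrightarrow> coprime x p" using prime_gt_0_nat[OF assms(1)] by simp
  thus ?thesis
    using square_mod_prime_power_iff[OF assms(1,2) _ assms(3), of x] prime_gt_0_nat[OF assms(1)]
    by (auto simp: mem_D_iff[of x] mem_D_iff[of "x mod p"])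
qed

lemma D_Suc_eq_image:
  assumes "prime p" "odd p"
  shows "D i p (Suc k) = (\<lambda>(r, q). r + p * q) ` (D i p 1 \<times> {..<p^k})"
    and "inj_on (\<lambda>(r, q). r + p * q) (D i p 1 \<times> {..<p^k})"
proof -
  have "p > 0" using prime_gt_0_nat[OF assms(1)] .
  have r: "r < p" if "r \<in> D i p 1" for r using that by (simp add: mem_D_iff)
  show "inj_on (\<lambda>(r, q). r + p * q) (D i p 1 \<times> {..<p^k})"
  proof (rule inj_onI, clarify)
    fix r q r' q' assume "r \<in> D i p 1" "r' \<in> D i p 1" and eq: "r + p * q = r' + p * q'"
    hence "r < p" "r' < p" using r by blast+
    hence "(r + p * q) mod p = r" "(r' + p * q') mod p = r'"
      and "(r + p * q) div p = q" "(r' + p * q') div p = q'"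
      using \<open>p > 0\<close> by simp_all
    thus "r = r' \<and> q = q'" using eq by metis
  qed
  show "D i p (Suc k) = (\<lambda>(r, q). r + p * q) ` (D i p 1 \<times> {..<p^k})"
  proof (rule subset_antisym; rule subsetI)
    fix x assume "x \<in> D i p (Suc k)"
    hence "x < p * p^k" "x mod p \<in> D i p 1"
      using mem_D_prime_power_iff[OF assms, of "Suc k"] by auto
    moreover have "x = x mod p + p * (x div p)" by simp
    ultimately show "x \<in> (\<lambda>(r, q). r + p * q) ` (D i p 1 \<times> {..<p^k})"
      by (intro image_eqI[of _ _ "(x mod p, x div p)"]) (auto simp: less_mult_imp_div_less mult.commute)
  next
    fix x assume "x \<in> (\<lambda>(r, q). r + p * q) ` (D i p 1 \<times> {..<p^k})"
    then obtain r q where x: "x = r + p * q" "r \<in> D i p 1" "q < p^k" by auto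
    have "x < p * Suc q" using x r by simp
    also have "\<dots> \<le> p * p^k" using x(3) by (intro mult_le_mono2) simp
    finally show "x \<in> D i p (Suc k)"
      using mem_D_prime_power_iff[OF assms, of "Suc k"] x r by simp
  qed
qed

lemma scaledD_eq_image:
  assumes "p > 0"
  shows "scaledD m i p k = (\<lambda>x. p^m * x) ` D i p k"
proof -
  have "p^m * x < p^(m + k)" if "x \<in> D i p k" for x
    using that assms by (simp add: mem_D_iff power_add)
  thus ?thesis unfolding scaledD_def by (intro image_cong) auto
qed

section \<open>Roots of unity\<close>

lemma omega_power: "omega N ^ j = exp (2 * pi * \<i> * of_nat j / of_nat N)"
  unfolding omega_def by (simp add: exp_of_nat_mult[symmetric] field_simps)

lemma omega_power_self:
  assumes "N > 0"
  shows "omega N ^ N = 1"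
  using assms by (simp add: omega_power)

lemma omega_power_eq_1_iff:
  assumes "N > 0"
  shows "omega N ^ j = 1 \<longleftrightarrow> N dvd j"
proof
  assume "N dvd j"
  then obtain t where "j = N * t" ..
  thus "omega N ^ j = 1" using omega_power_self[OF assms] by (simp add: power_mult)
next
  assume "omega N ^ j = 1"
  then obtain n :: int where "Im (2 * pi * \<i> * of_nat j / of_nat N) = of_int (2 * n) * pi"
    unfolding omega_power exp_eq_1 by blast
  hence "real j = real N * real_of_int n" using assms by (simp add: field_simps)
  hence "real_of_int (int j) = real_of_int (int N * n)" by simp
  hence "int j = int N * n" by (simp only: of_int_eq_iff)
  thus "N dvd j" by (metis dvd_triv_left int_dvd_int_iff)
qed

lemma omega_mult_power_mult:
  assumes "d > 0"
  shows "omega (d * N) ^ (d * j) = omega N ^ j"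
proof -
  have "omega (d * N) ^ d = omega N"
    using assms unfolding omega_power by (simp add: omega_def field_simps)
  thus ?thesis by (simp add: power_mult)
qed

lemma omega_power_mod:
  assumes "N > 0"
  shows "omega N ^ j = omega N ^ (j mod N)"
proof -
  have "omega N ^ j = omega N ^ (N * (j div N) + j mod N)" by simp
  also have "\<dots> = (omega N ^ N) ^ (j div N) * omega N ^ (j mod N)"
    by (simp only: power_add power_mult)
  finally
  show ?thesis using omega_power_self[OF assms] by simp
qed

lemma sum_omega_power_mult:
  assumes "N > 0"
  shows "(\<Sum>q<N. omega N ^ (c * q)) = (if N dvd c then of_nat N else 0)"
proof (cases "N dvd c")
  case True
  hence "omega N ^ c = 1" using omega_power_eq_1_iff[OF assms] by simp
  thus ?thesis using True by (simp add: power_mult)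
next
  case False
  hence "omega N ^ c \<noteq> 1" using omega_power_eq_1_iff[OF assms] by simp
  moreover have "(omega N ^ c) ^ N = 1"
    using omega_power_self[OF assms] by (metis mult.commute power_mult power_one)
  ultimately show ?thesis using False geometric_sum[of "omega N ^ c" N] by (simp add: power_mult)
qed

section \<open>Character sums over the non-squares\<close>

definition nonsquare_sum :: "nat \<Rightarrow> nat \<Rightarrow> nat \<Rightarrow> complex" where
  "nonsquare_sum p k a = (\<Sum>x\<in>D 1 p k. omega (p^k) ^ (a * x))"

lemma nonsquare_sum_Suc:
  assumes "prime p" "odd p"
  shows "nonsquare_sum p (Suc k) a =
    (if p^k dvd a then of_nat (p^k) * (\<Sum>r\<in>D 1 p 1. omega (p^Suc k) ^ (a * r)) else 0)"
proof -
  have "p > 0" using prime_gt_0_nat[OF assms(1)] .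
  have "nonsquare_sum p (Suc k) a = (\<Sum>(r, q)\<in>D 1 p 1 \<times> {..<p^k}. omega (p^Suc k) ^ (a * (r + p * q)))"
    unfolding nonsquare_sum_def D_Suc_eq_image(1)[OF assms] sum.reindex[OF D_Suc_eq_image(2)[OF assms]]
    by (simp add: case_prod_unfold)
  also have "\<dots> = (\<Sum>r\<in>D 1 p 1. \<Sum>q<p^k. omega (p^Suc k) ^ (a * r) * omega (p^k) ^ (a * q))"
  proof -
    have "omega (p^Suc k) ^ (a * (r + p * q)) = omega (p^Suc k) ^ (a * r) * omega (p^k) ^ (a * q)" for r q
      using omega_mult_power_mult[OF \<open>p > 0\<close>, of "p^k" "a * q"]
      by (simp add: power_add algebra_simps)
    thus ?thesis by (simp add: sum.cartesian_product)
  qed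
  also have "\<dots> = (\<Sum>r\<in>D 1 p 1. omega (p^Suc k) ^ (a * r) * (\<Sum>q<p^k. omega (p^k) ^ (a * q)))"
    by (simp add: sum_distrib_left)
  also have "\<dots> = (if p^k dvd a then of_nat (p^k) * (\<Sum>r\<in>D 1 p 1. omega (p^Suc k) ^ (a * r)) else 0)"
    using sum_omega_power_mult[of "p^k" a] \<open>p > 0\<close>
    by (simp flip: sum_distrib_right add: mult.commute)
  finally show ?thesis .
qed

lemma nonsquare_sum_Suc_eq_0:
  assumes "prime p" "odd p" and "\<not> p^k dvd a"
  shows "nonsquare_sum p (Suc k) a = 0"
  using assms by (simp add: nonsquare_sum_Suc)

lemma nonsquare_sum_Suc_mult:
  assumes "prime p" "odd p"
  shows "nonsquare_sum p (Suc k) (p^k * b) = of_nat (p^k) * nonsquare_sum p 1 b"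
proof -
  have scale: "omega (p^Suc k) ^ (p^k * b * r) = omega p ^ (b * r)" for r
    using omega_mult_power_mult[of "p^k" p "b * r"] prime_gt_0_nat[OF assms(1)]
    by (simp add: mult.assoc mult.commute[of p])
  have "nonsquare_sum p (Suc k) (p^k * b) =
      of_nat (p^k) * (\<Sum>r\<in>D 1 p 1. omega (p^Suc k) ^ (p^k * b * r))"
    using nonsquare_sum_Suc[OF assms, of k "p^k * b"] by simp
  also have "(\<Sum>r\<in>D 1 p 1. omega (p^Suc k) ^ (p^k * b * r)) = nonsquare_sum p 1 b"
    unfolding scale nonsquare_sum_def by simp
  finally show ?thesis .
qed

lemma nonsquare_sum_prime_dvd:
  assumes "prime p" "odd p" and "p dvd b"
  shows "nonsquare_sum p 1 b = (of_nat p - 1) / 2"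
proof -
  have "omega p ^ (b * x) = 1" for x
    using assms(3) prime_gt_0_nat[OF assms(1)] by (simp add: omega_power_eq_1_iff)
  hence "nonsquare_sum p 1 b = of_nat ((p - 1) div 2)"
    using card_D_prime[OF assms(1,2)] by (simp add: nonsquare_sum_def)
  also have "\<dots> = (of_nat p - 1) / 2"
    using \<open>odd p\<close> by (auto elim!: oddE)
  finally show ?thesis .
qed

lemma nonsquare_sum_prime_coprime:
  fixes p b :: nat
  assumes "prime p" "odd p" and "coprime b p"
  shows "nonsquare_sum p 1 b = eta (if square_mod p b then 1 else 0) p"
proof -
  have "p > 0" using prime_gt_0_nat[OF assms(1)] .
  have "inj_on (\<lambda>r. b * r mod p) (D 1 p 1)"
    by (rule inj_on_subset[OF inj_on_mult_mod[OF assms(3)]]) (auto simp: mem_D_iff)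
  hence "(\<Sum>s\<in>(\<lambda>r. b * r mod p) ` D 1 p 1. omega p ^ s) = (\<Sum>r\<in>D 1 p 1. omega p ^ (b * r mod p))"
    by (simp add: sum.reindex)
  also have "\<dots> = nonsquare_sum p 1 b"
    unfolding nonsquare_sum_def using omega_power_mod[OF \<open>p > 0\<close>] by simp
  finally show ?thesis
    unfolding image_mult_mod_D_prime[OF assms] eta_def omega_power by simp
qed

lemma sum_nonsquare_sum_below_valuation:
  assumes "prime p" "odd p" and "p^m dvd a"
  shows "(\<Sum>k\<in>{1..m}. nonsquare_sum p k a) = (of_nat (p^m) - 1) / 2"
proof -
  have "nonsquare_sum p (Suc j) a = of_nat p ^ j * ((of_nat p - 1) / 2)" if "j < m" for j
  proof -
    have "p^Suc j dvd a" using assms(3) that by (meson Suc_leI dvd_trans le_imp_power_dvd)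
    then obtain b where "a = p^Suc j * b" ..
    hence "a = p^j * (p * b)" by (simp add: ac_simps)
    thus ?thesis
      using nonsquare_sum_Suc_mult[OF assms(1,2)] nonsquare_sum_prime_dvd[OF assms(1,2)] by simp
  qed
  have "(\<Sum>k\<in>{1..m}. nonsquare_sum p k a) = (\<Sum>k\<in>Suc ` {..<m}. nonsquare_sum p k a)"
    by (simp only: image_Suc_lessThan)
  also have "\<dots> = (\<Sum>j<m. nonsquare_sum p (Suc j) a)"
    by (simp add: sum.reindex)
  also have "\<dots> = (\<Sum>j<m. of_nat p ^ j) * ((of_nat p - 1) / 2)"
    using \<open>\<And>j. j < m \<Longrightarrow> _\<close> by (simp add: sum_distrib_right)
  also have "\<dots> = (of_nat (p^m) - 1) / 2"
    using power_diff_1_eq[of "of_nat p :: complex" m] by (simp add: mult.commute)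
  finally show ?thesis .
qed

lemma S_poly_eq_nonsquare_sums:
  assumes "prime p"
  shows "S_poly p n (omega (p^n) ^ a) = 1 + (\<Sum>k\<in>{1..n}. nonsquare_sum p k a)"
proof -
  have "p > 0" using prime_gt_0_nat[OF assms] .
  define A where "A k = (\<lambda>x. p^(n-k) * x) ` D 1 p k" for k
  have C1: "C1 p n = insert 0 (\<Union>k\<in>{1..n}. A k)"
    unfolding C1_def A_def using scaledD_eq_image[OF \<open>p > 0\<close>] by auto
  have pn: "p^n = p^(n-k) * p^k" if "k \<le> n" for k
    using that by (simp flip: power_add)
  \<comment> \<open>elements of A k have p-adic valuation exactly n - k, which separates the A k\<close>
  have val: "p^j dvd y \<longleftrightarrow> j \<le> n - k" if "y \<in> A k" for y j k
    using that prime_power_dvd_mult_coprime_iff[OF assms] by (auto simp: A_def mem_D_iff)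
  have A: "A k \<subseteq> {0<..<p^n}" if "k \<in> {1..n}" for k
  proof
    fix y assume "y \<in> A k"
    then obtain x where "x \<in> D 1 p k" "y = p^(n-k) * x" by (auto simp: A_def)
    moreover have "x \<noteq> 0" using \<open>x \<in> D 1 p k\<close> prime_gt_1_nat[OF assms]
      by (auto simp: mem_D_iff intro!: gr0I)
    ultimately show "y \<in> {0<..<p^n}"
      using \<open>p > 0\<close> pn that by (auto simp: mem_D_iff)
  qed
  have disjoint: "A k \<inter> A j = {}" if "k \<in> {1..n}" "j \<in> {1..n}" "k \<noteq> j" for k j
    using val[of _ k] val[of _ j] that by (metis disjoint_iff diff_diff_cancel nle_le atLeastAtMost_iff)
  have "finite (A k)" for k by (simp add: A_def)
  have "S_poly p n (omega (p^n) ^ a) = (\<Sum>i<p^n. if i \<in> C1 p n then (omega (p^n) ^ a) ^ i else 0)"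
    unfolding S_poly_def dh_seq_def by (intro sum.cong) auto
  also have "\<dots> = (\<Sum>i\<in>{..<p^n} \<inter> C1 p n. (omega (p^n) ^ a) ^ i)"
    by (simp add: sum.inter_restrict)
  also have "{..<p^n} \<inter> C1 p n = C1 p n"
    using A \<open>p > 0\<close> unfolding C1 by fastforce
  also have "(\<Sum>i\<in>C1 p n. (omega (p^n) ^ a) ^ i) = 1 + (\<Sum>k\<in>{1..n}. \<Sum>y\<in>A k. (omega (p^n) ^ a) ^ y)"
  proof -
    have "0 \<notin> (\<Union>k\<in>{1..n}. A k)" using A by fastforce
    thus ?thesis
      unfolding C1 using disjoint \<open>\<And>k. finite (A k)\<close> by (simp add: sum.UNION_disjoint)
  qed
  also have "(\<Sum>k\<in>{1..n}. \<Sum>y\<in>A k. (omega (p^n) ^ a) ^ y) = (\<Sum>k\<in>{1..n}. nonsquare_sum p k a)"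
  proof (rule sum.cong[OF refl])
    fix k assume "k \<in> {1..n}"
    have "inj_on (\<lambda>x. p^(n-k) * x) (D 1 p k)" using \<open>p > 0\<close> by (simp add: inj_on_def)
    moreover have "(omega (p^n) ^ a) ^ (p^(n-k) * x) = omega (p^k) ^ (a * x)" for x
      using omega_mult_power_mult[of "p^(n-k)" "p^k" "a * x"] \<open>p > 0\<close> pn[of k] \<open>k \<in> {1..n}\<close>
      by (simp add: ac_simps flip: power_mult)
    ultimately show "(\<Sum>y\<in>A k. (omega (p^n) ^ a) ^ y) = nonsquare_sum p k a"
      by (simp add: A_def nonsquare_sum_def sum.reindex)
  qed
  finally show ?thesis .
qed

lemma S_poly_prime_power_multiple:
  assumes "prime p" "odd p" and "m \<le> n" and "p^m dvd a"
  shows "S_poly p n (omega (p^n) ^ a) = (of_nat (p^m) + 1) / 2 + (\<Sum>k\<in>{Suc m..n}. nonsquare_sum p k a)"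
proof -
  have "{1..n} = {1..m} \<union> {Suc m..n}" "{1..m} \<inter> {Suc m..n} = {}" using assms(3) by auto
  hence "(\<Sum>k\<in>{1..n}. nonsquare_sum p k a) =
      (\<Sum>k\<in>{1..m}. nonsquare_sum p k a) + (\<Sum>k\<in>{Suc m..n}. nonsquare_sum p k a)"
    by (simp add: sum.union_disjoint)
  thus ?thesis
    using S_poly_eq_nonsquare_sums[OF assms(1)] sum_nonsquare_sum_below_valuation[OF assms(1,2,4)]
    by (simp add: field_simps)
qed

lemma S_poly_scaledD:
  assumes "prime p" "odd p" and "m < n" and "a \<in> scaledD m i p (n - m)"
  shows "S_poly p n (omega (p^n) ^ a) = (of_nat (p^m) + 1) / 2 + of_nat (p^m) * eta (if i = 0 then 1 else 0) p"
proof -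
  obtain x where x: "x \<in> D i p (n - m)" and a: "a = p^m * x"
    using assms(4) scaledD_eq_image[OF prime_gt_0_nat[OF assms(1)]] by auto
  have "coprime x p" and "square_mod p x \<longleftrightarrow> i = 0"
    using x square_mod_prime_power_iff[OF assms(1,2), of x "n - m"] assms(3) by (auto simp: mem_D_iff)
  have "{Suc m..n} = insert (Suc m) {Suc (Suc m)..n}" using assms(3) by auto
  moreover have "nonsquare_sum p (Suc m) a = of_nat (p^m) * eta (if i = 0 then 1 else 0) p"
    using nonsquare_sum_Suc_mult[OF assms(1,2)] nonsquare_sum_prime_coprime[OF assms(1,2) \<open>coprime x p\<close>]
      \<open>square_mod p x \<longleftrightarrow> i = 0\<close> a by simp
  moreover have "nonsquare_sum p k a = 0" if k: "k \<in> {Suc (Suc m)..n}" for k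
  proof -
    obtain j where "k = Suc j" "m < j" using k by (auto intro!: that[of "k - 1"])
    thus ?thesis
      using nonsquare_sum_Suc_eq_0[OF assms(1,2)] prime_power_dvd_mult_coprime_iff[OF assms(1) \<open>coprime x p\<close>] a
      by simp
  qed
  ultimately show ?thesis
    using S_poly_prime_power_multiple[OF assms(1,2), of m n a] assms(3) a by simp
qed

theorem mainTheorem2:
  fixes p n a :: nat
  assumes "prime p" and "odd p" and "n \<ge> 1" and "a < p^n"
  shows "(a = 0 \<longrightarrow> S_poly p n (omega (p^n) ^ a) = (of_nat (p^n) + 1) / 2)
       \<and> (\<forall>m<n. a \<in> scaledD m 0 p (n - m) \<longrightarrow>
            S_poly p n (omega (p^n) ^ a) = (of_nat (p^m) + 1) / 2 + of_nat (p^m) * eta 1 p)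
       \<and> (\<forall>m<n. a \<in> scaledD m 1 p (n - m) \<longrightarrow>
            S_poly p n (omega (p^n) ^ a) = (of_nat (p^m) + 1) / 2 + of_nat (p^m) * eta 0 p)"
  using S_poly_prime_power_multiple[OF assms(1,2), of n n 0]
    S_poly_scaledD[OF assms(1,2), of _ n a 0] S_poly_scaledD[OF assms(1,2), of _ n a 1]
  by auto

end
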